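(* Let $S$ be a modular lattice of finite length and let $(L_x)_{x\in S}$, $(\varphi_{yx})_{x\prec y}$ be a locally $S$-connected system. For $x<y$ in $S$ and a maximal chain $x=x_0\prec x_1\prec\cdots\prec x_n=y$, put $\varphi_{yx}:=\varphi_{x_nx_{n-1}}\circ\cdots\circ\varphi_{x_2x_1}\circ\varphi_{x_1x_0}$ (composition of partial maps), and put $\varphi_{xx}=\mathrm{id}_{L_x}$. Then $\varphi_{yx}$ does not depend on the choice of the maximal chain, and the lattices $L_x$ ($x\in S$) together with the maps $\varphi_{yx}$ ($x\le y$) form an $S$-connected system.
   Context: A \emph{partial bijection} $\varphi$ from a set $A$ to a set $B$ is a bijection from a subset $\operatorname{dom}\varphi\subseteq A$ onto a subset $\operatorname{im}\varphi\subseteq B$ (possibly empty); composites $\psi\circ\varphi$ of partial maps are defined at $a$ iff $a\in\operatorname{dom}\varphi$ and $\varphi(a)\in\operatorname{dom}\psi$, and equality of partial maps means equal domains and equal values. $x\prec y$ means $y$ covers $x$. For a modular lattice $S$ of finite length, a \emph{locally $S$-connected system} consists of lattices $L_x$ ($x\in S$) of finite length and partial bijections $\varphi_{yx}$ from $L_x$ to $L_y$ for all $x\prec y$ in $S$ such that for all $u,v,x,y\in S$ with $u\prec v$ and $x\wedge y\prec x$, $x\wedge y\prec y$, $x\prec x\vee y$, $y\prec x\vee y$: (22) $\varphi_{vu}$ is a lattice isomorphism from a nonempty filter of $L_u$ onto an ideal of $L_v$; (23) $\varphi_{(x\vee y)x}\circ\varphi_{x(x\wedge y)}=\varphi_{(x\vee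 y)y}\circ\varphi_{y(x\wedge y)}$, and this common partial map is denoted $\varphi_{(x\vee y)(x\wedge y)}$; (24) $\operatorname{im}\varphi_{(x\vee y)x}\cap\operatorname{im}\varphi_{(x\vee y)y}\subseteq\operatorname{im}\varphi_{(x\vee y)(x\wedge y)}$; (24$^\delta$) $\operatorname{dom}\varphi_{x(x\wedge y)}\cap\operatorname{dom}\varphi_{y(x\wedge y)}\subseteq\operatorname{dom}\varphi_{(x\vee y)(x\wedge y)}$. For a lattice $S$ of finite length, an \emph{$S$-connected system} consists of lattices $L_x$ ($x\in S$) of finite length and partial bijections $\varphi_{yx}$ from $L_x$ to $L_y$ for all $x\le y$ in $S$ such that for all $x,y\in S$: (17) if $\varphi_{yx}\ne\emptyset$ then $\operatorname{dom}\varphi_{yx}$ is a filter of $L_x$, $\operatorname{im}\varphi_{yx}$ is an ideal of $L_y$ and $\varphi_{yx}$ is a lattice isomorphism between them; $\varphi_{xx}=\mathrm{id}_{L_x}$; (18) if $x\prec y$ then $\varphi_{yx}\ne\emptyset$; (19) for $x\le z\le y$: $\varphi_{yx}=\varphi_{yz}\circ\varphi_{zx}$; (20) $\operatorname{im}\varphi_{(x\vee y)x}\cap\operatorname{im}\varphi_{(x\vee y)y}\subseteq\operatorname{im}\varphi_{(x\vee y)(x\wedge y)}$; (20$^\delta$) $\operatorname{dom}\varphi_{x(x\wedge y)}\cap\operatorname{dom}\varphi_{y(x\wedge y)}\subseteq\operatorname{dom}\varphi_{(x\vee y)(x\wedge y)}$. *)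

theory Defs
  imports "HOL-Algebra.Lattice"
begin

definition covers :: "'s::order \<Rightarrow> 's \<Rightarrow> bool" (infix "\<prec>" 50) where
  "x \<prec> y \<longleftrightarrow> x < y \<and> \<not> (\<exists>z. x < z \<and> z < y)"

definition modular_lattice :: "'s::lattice itself \<Rightarrow> bool" where
  "modular_lattice _ \<longleftrightarrow>
     (\<forall>a b c :: 's. a \<le> c \<longrightarrow> Lattices.sup a (Lattices.inf b c) = Lattices.inf (Lattices.sup a b) c)"

definition finite_length :: "'s::order itself \<Rightarrow> bool" where
  "finite_length _ \<longleftrightarrow>
     (\<exists>n::nat. \<forall>C :: 's set. (\<forall>a\<in>C. \<forall>b\<in>C. a \<le> b \<or> b \<le> a) \<longrightarrow> finite C \<and> card C \<le> n)"

definition lattice_finite_length :: "('a, 'b) gorder_scheme \<Rightarrow> bool" where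
  "lattice_finite_length L \<longleftrightarrow> lattice L \<and>
     (\<exists>n::nat. \<forall>C \<subseteq> carrier L. (\<forall>a\<in>C. \<forall>b\<in>C. a \<sqsubseteq>\<^bsub>L\<^esub> b \<or> b \<sqsubseteq>\<^bsub>L\<^esub> a)
        \<longrightarrow> finite C \<and> card C \<le> n)"

definition lat_filter :: "('a, 'b) gorder_scheme \<Rightarrow> 'a set \<Rightarrow> bool" where
  "lat_filter L F \<longleftrightarrow> F \<subseteq> carrier L \<and>
     (\<forall>a\<in>F. \<forall>b\<in>carrier L. a \<sqsubseteq>\<^bsub>L\<^esub> b \<longrightarrow> b \<in> F) \<and>
     (\<forall>a\<in>F. \<forall>b\<in>F. a \<sqinter>\<^bsub>L\<^esub> b \<in> F)"

definition lat_ideal :: "('a, 'b) gorder_scheme \<Rightarrow> 'a set \<Rightarrow> bool" where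
  "lat_ideal L I \<longleftrightarrow> I \<subseteq> carrier L \<and>
     (\<forall>a\<in>I. \<forall>b\<in>carrier L. b \<sqsubseteq>\<^bsub>L\<^esub> a \<longrightarrow> b \<in> I) \<and>
     (\<forall>a\<in>I. \<forall>b\<in>I. a \<squnion>\<^bsub>L\<^esub> b \<in> I)"

definition partial_bij :: "('a, 'b) gorder_scheme \<Rightarrow> ('a, 'b) gorder_scheme \<Rightarrow> ('a \<rightharpoonup> 'a) \<Rightarrow> bool" where
  "partial_bij L M f \<longleftrightarrow> dom f \<subseteq> carrier L \<and> ran f \<subseteq> carrier M \<and> inj_on f (dom f)"

definition lattice_iso_between :: "('a, 'b) gorder_scheme \<Rightarrow> ('a, 'b) gorder_scheme \<Rightarrow> ('a \<rightharpoonup> 'a) \<Rightarrow> bool" where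
  "lattice_iso_between L M f \<longleftrightarrow> inj_on f (dom f) \<and>
     (\<forall>a\<in>dom f. \<forall>b\<in>dom f.
        f (a \<sqinter>\<^bsub>L\<^esub> b) = Some (the (f a) \<sqinter>\<^bsub>M\<^esub> the (f b)) \<and>
        f (a \<squnion>\<^bsub>L\<^esub> b) = Some (the (f a) \<squnion>\<^bsub>M\<^esub> the (f b)))"

definition id_on_carrier :: "('a, 'b) gorder_scheme \<Rightarrow> ('a \<rightharpoonup> 'a)" where
  "id_on_carrier L = (\<lambda>a. if a \<in> carrier L then Some a else None)"

definition locally_connected_system ::
  "('s::lattice \<Rightarrow> ('a, 'b) gorder_scheme) \<Rightarrow> ('s \<Rightarrow> 's \<Rightarrow> ('a \<rightharpoonup> 'a)) \<Rightarrow> bool" where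
  "locally_connected_system L \<phi> \<longleftrightarrow>
     (\<forall>x. lattice_finite_length (L x)) \<and>
     (\<forall>u v. u \<prec> v \<longrightarrow> partial_bij (L u) (L v) (\<phi> v u)) \<and>
     \<comment> \<open>(22)\<close>
     (\<forall>u v. u \<prec> v \<longrightarrow> dom (\<phi> v u) \<noteq> {} \<and> lat_filter (L u) (dom (\<phi> v u)) \<and>
            lat_ideal (L v) (ran (\<phi> v u)) \<and> lattice_iso_between (L u) (L v) (\<phi> v u)) \<and>
     (\<forall>x y. Lattices.inf x y \<prec> x \<and> Lattices.inf x y \<prec> y \<and>
            x \<prec> Lattices.sup x y \<and> y \<prec> Lattices.sup x y \<longrightarrow>
        \<comment> \<open>(23)\<close>
        (\<phi> (Lattices.sup x y) x \<circ>\<^sub>m \<phi> x (Lattices.inf x y)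
           = \<phi> (Lattices.sup x y) y \<circ>\<^sub>m \<phi> y (Lattices.inf x y)) \<and>
        \<comment> \<open>(24)\<close>
        (ran (\<phi> (Lattices.sup x y) x) \<inter> ran (\<phi> (Lattices.sup x y) y)
           \<subseteq> ran (\<phi> (Lattices.sup x y) x \<circ>\<^sub>m \<phi> x (Lattices.inf x y))) \<and>
        \<comment> \<open>(24delta)\<close>
        (dom (\<phi> x (Lattices.inf x y)) \<inter> dom (\<phi> y (Lattices.inf x y))
           \<subseteq> dom (\<phi> (Lattices.sup x y) x \<circ>\<^sub>m \<phi> x (Lattices.inf x y))))"

definition connected_system ::
  "('s::lattice \<Rightarrow> ('a, 'b) gorder_scheme) \<Rightarrow> ('s \<Rightarrow> 's \<Rightarrow> ('a \<rightharpoonup> 'a)) \<Rightarrow> bool" where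
  "connected_system L \<Phi> \<longleftrightarrow>
     (\<forall>x. lattice_finite_length (L x)) \<and>
     (\<forall>x y. x \<le> y \<longrightarrow> partial_bij (L x) (L y) (\<Phi> y x)) \<and>
     \<comment> \<open>(17)\<close>
     (\<forall>x y. x \<le> y \<longrightarrow> \<Phi> y x \<noteq> Map.empty \<longrightarrow>
        lat_filter (L x) (dom (\<Phi> y x)) \<and> lat_ideal (L y) (ran (\<Phi> y x)) \<and>
        lattice_iso_between (L x) (L y) (\<Phi> y x)) \<and>
     (\<forall>x. \<Phi> x x = id_on_carrier (L x)) \<and>
     \<comment> \<open>(18)\<close>
     (\<forall>x y. x \<prec> y \<longrightarrow> \<Phi> y x \<noteq> Map.empty) \<and>
     \<comment> \<open>(19)\<close>
     (\<forall>x y z. x \<le> z \<and> z \<le> y \<longrightarrow> \<Phi> y x = \<Phi> y z \<circ>\<^sub>m \<Phi> z x) \<and>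
     \<comment> \<open>(20)\<close>
     (\<forall>x y. ran (\<Phi> (Lattices.sup x y) x) \<inter> ran (\<Phi> (Lattices.sup x y) y)
              \<subseteq> ran (\<Phi> (Lattices.sup x y) (Lattices.inf x y))) \<and>
     \<comment> \<open>(20delta)\<close>
     (\<forall>x y. dom (\<Phi> x (Lattices.inf x y)) \<inter> dom (\<Phi> y (Lattices.inf x y))
              \<subseteq> dom (\<Phi> (Lattices.sup x y) (Lattices.inf x y)))"

definition maximal_chain :: "'s::order \<Rightarrow> 's \<Rightarrow> 's list \<Rightarrow> bool" where
  "maximal_chain x y xs \<longleftrightarrow> xs \<noteq> [] \<and> hd xs = x \<and> last xs = y \<and>
     (\<forall>i. Suc i < length xs \<longrightarrow> xs ! i \<prec> xs ! Suc i)"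

(* chain_comp \<phi> [x0,...,xn] = \<phi> xn x(n-1) \<circ>m ... \<circ>m \<phi> x1 x0  (for n \<ge> 1) *)
fun chain_comp :: "('s \<Rightarrow> 's \<Rightarrow> ('a \<rightharpoonup> 'a)) \<Rightarrow> 's list \<Rightarrow> ('a \<rightharpoonup> 'a)" where
  "chain_comp \<phi> (a # b # rest) = chain_comp \<phi> (b # rest) \<circ>\<^sub>m \<phi> b a"
| "chain_comp \<phi> _ = Some"

definition induced_maps ::
  "('s::lattice \<Rightarrow> ('a, 'b) gorder_scheme) \<Rightarrow> ('s \<Rightarrow> 's \<Rightarrow> ('a \<rightharpoonup> 'a)) \<Rightarrow> 's \<Rightarrow> 's \<Rightarrow> ('a \<rightharpoonup> 'a)" where
  "induced_maps L \<phi> y x =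
     (if x = y then id_on_carrier (L x)
      else if x < y then chain_comp \<phi> (SOME xs. maximal_chain x y xs)
      else Map.empty)"

end

theory Submission
  imports Defs
begin

text \<open>Two maximal chains from \<open>x\<close> to \<open>y\<close> that start with distinct covers \<open>a\<close>, \<open>b\<close> of \<open>x\<close>
can both be rerouted through \<open>a \<squnion> b\<close>, which by modularity covers \<open>a\<close> and \<open>b\<close>; the reroutings
differ by a covering square, where (23) applies, so induction on the length of \<open>[x, y]\<close> shows
that the composite along a maximal chain does not depend on the chain. Since filter-ideal
isomorphisms compose and maximal chains concatenate, (17)--(19) follow. Conditions (20)
and (20\<open>\<delta>\<close>) follow by induction on the length of \<open>[x \<sqinter> y, x \<squnion> y]\<close>: for a covering square
they are (24) and (24\<open>\<delta>\<close>); otherwise some \<open>x \<sqinter> y < x' < x\<close> splits the pair into \<open>(x', y)\<close>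
and \<open>(x, x' \<squnion> y)\<close>, whose intervals are shorter by modularity, and the two instances glue
together along the transitivity (19) and the injectivity of the maps.\<close>

lemma map_comp_Some_left [simp]: "Some \<circ>\<^sub>m f = f"
  by (rule ext) (simp add: map_comp_def split: option.split)

lemma map_comp_assoc: "(h \<circ>\<^sub>m g) \<circ>\<^sub>m f = h \<circ>\<^sub>m (g \<circ>\<^sub>m f)"
  by (rule ext) (simp add: map_comp_def split: option.split)

lemma dom_map_comp_iff: "a \<in> dom (g \<circ>\<^sub>m f) \<longleftrightarrow> (\<exists>b. f a = Some b \<and> b \<in> dom g)"
  by (auto simp: dom_def map_comp_Some_iff)

lemma ran_map_comp_iff: "c \<in> ran (g \<circ>\<^sub>m f) \<longleftrightarrow> (\<exists>b. b \<in> ran f \<and> g b = Some c)"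
  by (auto simp: ran_def map_comp_Some_iff)

lemma dom_map_comp_subset: "dom (g \<circ>\<^sub>m f) \<subseteq> dom f"
  by (auto simp: map_comp_def split: option.splits)

lemma ran_map_comp_subset: "ran (g \<circ>\<^sub>m f) \<subseteq> ran g"
  by (auto simp: ran_def map_comp_Some_iff)

lemma map_comp_id_on_carrier_right:
  assumes "dom f \<subseteq> carrier L"
  shows "f \<circ>\<^sub>m id_on_carrier L = f"
proof (rule ext)
  fix a
  have "f a = None" if "a \<notin> carrier L" using assms that by blast
  then show "(f \<circ>\<^sub>m id_on_carrier L) a = f a"
    by (cases "a \<in> carrier L") (auto simp: id_on_carrier_def)
qed

lemma map_comp_id_on_carrier_left: "ran f \<subseteq> carrier L \<Longrightarrow> id_on_carrier L \<circ>\<^sub>m f = f"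
  by (rule ext) (auto simp: map_comp_def id_on_carrier_def subset_iff ran_def split: option.split)

definition filter_ideal_iso ::
  "('a, 'b) gorder_scheme \<Rightarrow> ('a, 'b) gorder_scheme \<Rightarrow> ('a \<rightharpoonup> 'a) \<Rightarrow> bool" where
  "filter_ideal_iso L M f \<longleftrightarrow>
     lat_filter L (dom f) \<and> lat_ideal M (ran f) \<and> lattice_iso_between L M f"

lemma filter_ideal_iso_partial_bij: "filter_ideal_iso L M f \<Longrightarrow> partial_bij L M f"
  unfolding filter_ideal_iso_def partial_bij_def lat_filter_def lat_ideal_def
    lattice_iso_between_def
  by blast

lemma lattice_iso_between_Some:
  assumes "lattice_iso_between L M f" "f a = Some a'" "f b = Some b'"
  shows "f (a \<squnion>\<^bsub>L\<^esub> b) = Some (a' \<squnion>\<^bsub>M\<^esub> b')"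
    and "f (a \<sqinter>\<^bsub>L\<^esub> b) = Some (a' \<sqinter>\<^bsub>M\<^esub> b')"
  using assms unfolding lattice_iso_between_def by (auto simp: domI)

lemma lattice_iso_between_map_comp:
  assumes f: "lattice_iso_between L M f" and g: "lattice_iso_between M N g"
  shows "lattice_iso_between L N (g \<circ>\<^sub>m f)"
  unfolding lattice_iso_between_def
proof (intro conjI ballI)
  show "inj_on (g \<circ>\<^sub>m f) (dom (g \<circ>\<^sub>m f))"
  proof (rule inj_onI)
    fix a b
    assume "a \<in> dom (g \<circ>\<^sub>m f)" "b \<in> dom (g \<circ>\<^sub>m f)" and eq: "(g \<circ>\<^sub>m f) a = (g \<circ>\<^sub>m f) b"
    then obtain a' b' where fa: "f a = Some a'" "a' \<in> dom g" and fb: "f b = Some b'" "b' \<in> dom g"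
      by (auto simp: dom_map_comp_iff)
    have "g a' = g b'" using eq fa fb by simp
    then have "a' = b'"
      using g fa(2) fb(2) unfolding lattice_iso_between_def by (meson inj_onD)
    then show "a = b"
      using f fa fb unfolding lattice_iso_between_def by (metis domI inj_onD)
  qed
next
  fix a b assume "a \<in> dom (g \<circ>\<^sub>m f)" "b \<in> dom (g \<circ>\<^sub>m f)"
  then obtain a' b' a'' b'' where
    "f a = Some a'" "f b = Some b'" "g a' = Some a''" "g b' = Some b''"
    by (auto simp: dom_map_comp_iff)
  then show "(g \<circ>\<^sub>m f) (a \<sqinter>\<^bsub>L\<^esub> b) = Some (the ((g \<circ>\<^sub>m f) a) \<sqinter>\<^bsub>N\<^esub> the ((g \<circ>\<^sub>m f) b))"
    and "(g \<circ>\<^sub>m f) (a \<squnion>\<^bsub>L\<^esub> b) = Some (the ((g \<circ>\<^sub>m f) a) \<squnion>\<^bsub>N\<^esub> the ((g \<circ>\<^sub>m f) b))"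
    using lattice_iso_between_Some[OF f] lattice_iso_between_Some[OF g] by simp_all
qed

lemma filter_ideal_iso_le_iff:
  assumes L: "lattice L" and M: "lattice M" and f: "filter_ideal_iso L M f"
    and fa: "f a = Some a'" and fb: "f b = Some b'"
  shows "a \<sqsubseteq>\<^bsub>L\<^esub> b \<longleftrightarrow> a' \<sqsubseteq>\<^bsub>M\<^esub> b'"
proof -
  have bij: "partial_bij L M f" using f by (rule filter_ideal_iso_partial_bij)
  then have "a \<in> carrier L" "b \<in> carrier L" "a' \<in> carrier M" "b' \<in> carrier M"
    using fa fb unfolding partial_bij_def by (auto intro: domI ranI)
  then have le_iff: "a \<sqsubseteq>\<^bsub>L\<^esub> b \<longleftrightarrow> a \<squnion>\<^bsub>L\<^esub> b = b" "a' \<sqsubseteq>\<^bsub>M\<^esub> b' \<longleftrightarrow> a' \<squnion>\<^bsub>M\<^esub> b' = b'"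
    using lattice.le_iff_meet[OF L] lattice.le_iff_meet[OF M] by blast+
  have join: "f (a \<squnion>\<^bsub>L\<^esub> b) = Some (a' \<squnion>\<^bsub>M\<^esub> b')"
    using f fa fb unfolding filter_ideal_iso_def by (blast intro: lattice_iso_between_Some)
  have "a \<squnion>\<^bsub>L\<^esub> b = b \<longleftrightarrow> f (a \<squnion>\<^bsub>L\<^esub> b) = f b"
    using bij join fb unfolding partial_bij_def by (metis domI inj_onD)
  also have "\<dots> \<longleftrightarrow> a' \<squnion>\<^bsub>M\<^esub> b' = b'" using join fb by simp
  finally show ?thesis using le_iff by simp
qed

lemma lat_filter_dom_map_comp:
  assumes L: "lattice L" and M: "lattice M" and f: "filter_ideal_iso L M f"
    and g: "lat_filter M (dom g)"
  shows "lat_filter L (dom (g \<circ>\<^sub>m f))"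
proof -
  have fF: "lat_filter L (dom f)" and fiso: "lattice_iso_between L M f"
    using f unfolding filter_ideal_iso_def by auto
  show ?thesis unfolding lat_filter_def
  proof (intro conjI ballI impI)
    show "dom (g \<circ>\<^sub>m f) \<subseteq> carrier L"
      using fF dom_map_comp_subset[of g f] unfolding lat_filter_def by blast
  next
    fix a b assume a: "a \<in> dom (g \<circ>\<^sub>m f)" and b: "b \<in> carrier L" and ab: "a \<sqsubseteq>\<^bsub>L\<^esub> b"
    obtain a' where fa: "f a = Some a'" and a'g: "a' \<in> dom g"
      using a by (auto simp: dom_map_comp_iff)
    have "b \<in> dom f" using fF fa b ab unfolding lat_filter_def by (blast intro: domI)
    then obtain b' where fb: "f b = Some b'" by blast
    have "a' \<sqsubseteq>\<^bsub>M\<^esub> b'" using filter_ideal_iso_le_iff[OF L M f fa fb] ab by simp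
    moreover have "b' \<in> carrier M"
      using filter_ideal_iso_partial_bij[OF f] fb unfolding partial_bij_def by (blast intro: ranI)
    ultimately have "b' \<in> dom g" using g a'g unfolding lat_filter_def by blast
    then show "b \<in> dom (g \<circ>\<^sub>m f)" using fb by (simp add: dom_map_comp_iff)
  next
    fix a b assume "a \<in> dom (g \<circ>\<^sub>m f)" "b \<in> dom (g \<circ>\<^sub>m f)"
    then obtain a' b' where "f a = Some a'" "a' \<in> dom g" "f b = Some b'" "b' \<in> dom g"
      by (auto simp: dom_map_comp_iff)
    then show "a \<sqinter>\<^bsub>L\<^esub> b \<in> dom (g \<circ>\<^sub>m f)"
      using lattice_iso_between_Some(2)[OF fiso] g unfolding lat_filter_def
      by (simp add: dom_map_comp_iff)
  qed
qed

lemma lat_ideal_ran_map_comp: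
  assumes M: "lattice M" and N: "lattice N" and g: "filter_ideal_iso M N g"
    and f: "lat_ideal M (ran f)"
  shows "lat_ideal N (ran (g \<circ>\<^sub>m f))"
proof -
  have gI: "lat_ideal N (ran g)" and giso: "lattice_iso_between M N g"
    using g unfolding filter_ideal_iso_def by auto
  have dom_g: "dom g \<subseteq> carrier M"
    using filter_ideal_iso_partial_bij[OF g] unfolding partial_bij_def by blast
  show ?thesis unfolding lat_ideal_def
  proof (intro conjI ballI impI)
    show "ran (g \<circ>\<^sub>m f) \<subseteq> carrier N"
      using gI ran_map_comp_subset[of g f] unfolding lat_ideal_def by blast
  next
    fix c d assume c: "c \<in> ran (g \<circ>\<^sub>m f)" and d: "d \<in> carrier N" and dc: "d \<sqsubseteq>\<^bsub>N\<^esub> c"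
    obtain a' where a'f: "a' \<in> ran f" and ga: "g a' = Some c"
      using c by (auto simp: ran_map_comp_iff)
    have "d \<in> ran g" using gI ga d dc unfolding lat_ideal_def by (blast intro: ranI)
    then obtain b' where gb: "g b' = Some d" by (auto simp: ran_def)
    have "b' \<sqsubseteq>\<^bsub>M\<^esub> a'" using filter_ideal_iso_le_iff[OF M N g gb ga] dc by simp
    moreover have "b' \<in> carrier M" using dom_g domI[of g b' d, OF gb] by blast
    ultimately have "b' \<in> ran f" using f a'f unfolding lat_ideal_def by blast
    then show "d \<in> ran (g \<circ>\<^sub>m f)" using gb by (auto simp: ran_map_comp_iff)
  next
    fix c d assume "c \<in> ran (g \<circ>\<^sub>m f)" "d \<in> ran (g \<circ>\<^sub>m f)"
    then obtain a' b' where "a' \<in> ran f" "g a' = Some c" "b' \<in> ran f" "g b' = Some d"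
      by (auto simp: ran_map_comp_iff)
    then have "a' \<squnion>\<^bsub>M\<^esub> b' \<in> ran f" "g (a' \<squnion>\<^bsub>M\<^esub> b') = Some (c \<squnion>\<^bsub>N\<^esub> d)"
      using f lattice_iso_between_Some(1)[OF giso] unfolding lat_ideal_def by auto
    then show "c \<squnion>\<^bsub>N\<^esub> d \<in> ran (g \<circ>\<^sub>m f)" by (auto simp: ran_map_comp_iff)
  qed
qed

lemma filter_ideal_iso_map_comp:
  assumes L: "lattice L" and M: "lattice M" and N: "lattice N"
    and f: "filter_ideal_iso L M f" and g: "filter_ideal_iso M N g"
  shows "filter_ideal_iso L N (g \<circ>\<^sub>m f)"
proof -
  have "lattice_iso_between L M f" "lattice_iso_between M N g"
    and "lat_filter M (dom g)" "lat_ideal M (ran f)"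
    using f g unfolding filter_ideal_iso_def by auto
  then show ?thesis unfolding filter_ideal_iso_def
    by (simp add: lat_filter_dom_map_comp[OF L M f] lat_ideal_ran_map_comp[OF M N g]
        lattice_iso_between_map_comp)
qed

lemma filter_ideal_iso_id_on_carrier:
  assumes "lattice L"
  shows "filter_ideal_iso L L (id_on_carrier L)"
proof -
  interpret lattice L by fact
  have dom: "dom (id_on_carrier L) = carrier L" and ran: "ran (id_on_carrier L) = carrier L"
    by (auto simp: id_on_carrier_def ran_def split: if_splits)
  have "lat_filter L (carrier L)" "lat_ideal L (carrier L)"
    unfolding lat_filter_def lat_ideal_def by auto
  moreover have "lattice_iso_between L L (id_on_carrier L)"
    unfolding lattice_iso_between_def dom by (auto simp: id_on_carrier_def inj_on_def)
  ultimately show ?thesis unfolding filter_ideal_iso_def dom ran by blast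
qed

lemma covers_less: "x \<prec> y \<Longrightarrow> x < y"
  unfolding covers_def by simp

lemma covers_between_cases: "x \<prec> y \<Longrightarrow> x \<le> z \<Longrightarrow> z \<le> y \<Longrightarrow> z = x \<or> z = y"
  unfolding covers_def by (auto simp: order.order_iff_strict)

lemma inf_of_distinct_covers:
  fixes x a b :: "'s::lattice"
  assumes xa: "x \<prec> a" and xb: "x \<prec> b" and "a \<noteq> b"
  shows "Lattices.inf a b = x"
proof -
  have "x \<le> Lattices.inf a b"
    using covers_less[OF xa] covers_less[OF xb] by (simp add: less_imp_le)
  then show ?thesis
    using covers_between_cases[OF xa, of "Lattices.inf a b"]
      covers_between_cases[OF xb, of "Lattices.inf a b"] \<open>a \<noteq> b\<close>
    by auto
qed

lemma modular_latticeD: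
  "modular_lattice TYPE('s::lattice) \<Longrightarrow> (a::'s) \<le> c \<Longrightarrow>
     Lattices.sup a (Lattices.inf b c) = Lattices.inf (Lattices.sup a b) c"
  unfolding modular_lattice_def by blast

lemma covers_sup_of_distinct_covers:
  fixes x a b :: "'s::lattice"
  assumes modular: "modular_lattice TYPE('s)"
    and xa: "x \<prec> a" and xb: "x \<prec> b" and "a \<noteq> b"
  shows "a \<prec> Lattices.sup a b"
proof -
  have "x \<le> b" "x \<noteq> b" using covers_less[OF xb] by auto
  then have "\<not> b \<le> a" using covers_between_cases[OF xa, of b] \<open>a \<noteq> b\<close> by auto
  then have "a < Lattices.sup a b" by (metis less_le sup_ge1 sup_ge2)
  moreover have "\<not> (a < z \<and> z < Lattices.sup a b)" for z
  proof
    assume z: "a < z \<and> z < Lattices.sup a b"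
    then have modular_eq: "Lattices.sup a (Lattices.inf b z) = z"
      using modular_latticeD[OF modular, of a z b] by (simp add: inf.absorb2 less_imp_le)
    have "x \<le> Lattices.inf b z"
      using covers_less[OF xa] covers_less[OF xb] z by (meson le_inf_iff less_imp_le less_trans)
    then have "Lattices.inf b z = x \<or> Lattices.inf b z = b"
      using covers_between_cases[OF xb] by simp
    then show False
    proof
      assume "Lattices.inf b z = x"
      then have "z = a" using modular_eq covers_less[OF xa] by (simp add: sup.absorb1 less_imp_le)
      then show False using z by simp
    next
      assume "Lattices.inf b z = b"
      then have "b \<le> z" by (simp add: inf.absorb_iff1)
      then have "Lattices.sup a b \<le> z" using z by (simp add: less_imp_le)
      then show False using z leD by blast
    qed
  qed
  ultimately show ?thesis unfolding covers_def by blast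
qed

lemma modular_interval_split:
  fixes x x' y :: "'s::lattice"
  assumes modular: "modular_lattice TYPE('s)"
    and lower: "Lattices.inf x y \<le> x'" and "x' < x"
  shows "Lattices.inf x' y = Lattices.inf x y"
    and "Lattices.inf x (Lattices.sup x' y) = x'"
    and "Lattices.sup x (Lattices.sup x' y) = Lattices.sup x y"
    and "Lattices.sup x' y < Lattices.sup x y"
proof -
  have "x' \<le> x" using \<open>x' < x\<close> by simp
  show "Lattices.inf x' y = Lattices.inf x y"
    using antisym[OF inf_mono[OF \<open>x' \<le> x\<close> order_refl] le_infI[OF lower inf_le2]] .
  have "Lattices.sup x' (Lattices.inf y x) = Lattices.inf (Lattices.sup x' y) x"
    using modular_latticeD[OF modular \<open>x' \<le> x\<close>] .
  then show meet: "Lattices.inf x (Lattices.sup x' y) = x'"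
    using lower by (simp add: inf_commute sup.absorb1)
  show "Lattices.sup x (Lattices.sup x' y) = Lattices.sup x y"
    using \<open>x' \<le> x\<close> by (metis sup.absorb1 sup_assoc)
  have "Lattices.sup x' y \<noteq> Lattices.sup x y"
  proof
    assume "Lattices.sup x' y = Lattices.sup x y"
    then have "x' = x" using meet by simp
    then show False using \<open>x' < x\<close> by simp
  qed
  then show "Lattices.sup x' y < Lattices.sup x y"
    using \<open>x' \<le> x\<close> by (simp add: less_le le_supI1)
qed

text \<open>Induction on a bound \<open>k\<close> for the sizes of chains in \<open>[a, b]\<close> stands in for induction on
the length of the interval.\<close>

definition interval_chain_bound :: "'s::order \<Rightarrow> 's \<Rightarrow> nat \<Rightarrow> bool" where
  "interval_chain_bound a b k \<longleftrightarrow>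
     (\<forall>C \<subseteq> {a..b}. (\<forall>p\<in>C. \<forall>q\<in>C. p \<le> q \<or> q \<le> p) \<longrightarrow> finite C \<and> card C \<le> k)"

lemma interval_chain_bound_exists:
  assumes "finite_length TYPE('s::order)"
  obtains k where "interval_chain_bound (a::'s) b k"
proof -
  obtain k where "\<forall>C :: 's set. (\<forall>p\<in>C. \<forall>q\<in>C. p \<le> q \<or> q \<le> p) \<longrightarrow> finite C \<and> card C \<le> k"
    using assms unfolding finite_length_def by blast
  then have "interval_chain_bound a b k" unfolding interval_chain_bound_def by blast
  then show ?thesis by (rule that)
qed

lemma not_interval_chain_bound_0:
  assumes "a \<le> b"
  shows "\<not> interval_chain_bound a b 0"
proof
  assume "interval_chain_bound a b 0"
  from this[unfolded interval_chain_bound_def, rule_format, of "{a}"] assms show False by simp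
qed

lemma interval_chain_bound_Suc_remove:
  assumes bound: "interval_chain_bound a b (Suc k)"
    and sub: "{a'..b'} \<subseteq> {a..b}" and c: "c \<in> {a..b} - {a'..b'}"
    and comparable: "\<forall>p\<in>{a'..b'}. p \<le> c \<or> c \<le> p"
  shows "interval_chain_bound a' b' k"
  unfolding interval_chain_bound_def
proof (intro allI impI)
  fix C assume C: "C \<subseteq> {a'..b'}" and chain: "\<forall>p\<in>C. \<forall>q\<in>C. p \<le> q \<or> q \<le> p"
  have "insert c C \<subseteq> {a..b}" using C sub c by blast
  moreover have "\<forall>p\<in>insert c C. \<forall>q\<in>insert c C. p \<le> q \<or> q \<le> p"
    using chain comparable C by blast
  ultimately have "finite (insert c C) \<and> card (insert c C) \<le> Suc k"
    by (rule bound[unfolded interval_chain_bound_def, THEN spec, THEN mp, THEN mp])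
  moreover have "c \<notin> C" using C c by (meson DiffD2 subsetD)
  ultimately show "finite C \<and> card C \<le> k" by (auto simp: card_insert_disjoint)
qed

lemma interval_chain_bound_Suc_lower:
  assumes bound: "interval_chain_bound a b (Suc k)" and "a < a'" "a' \<le> b"
  shows "interval_chain_bound a' b k"
proof (rule interval_chain_bound_Suc_remove[OF bound])
  have "a \<le> a'" using \<open>a < a'\<close> by simp
  then show "{a'..b} \<subseteq> {a..b}" by auto
  show "a \<in> {a..b} - {a'..b}" using assms(2,3) by auto
  show "\<forall>p\<in>{a'..b}. p \<le> a \<or> a \<le> p" using \<open>a \<le> a'\<close> by (auto intro: order.trans)
qed

lemma interval_chain_bound_Suc_upper:
  assumes bound: "interval_chain_bound a b (Suc k)" and "b' < b" "a \<le> b'"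
  shows "interval_chain_bound a b' k"
proof (rule interval_chain_bound_Suc_remove[OF bound])
  have "b' \<le> b" using \<open>b' < b\<close> by simp
  then show "{a..b'} \<subseteq> {a..b}" by auto
  show "b \<in> {a..b} - {a..b'}" using assms(2,3) by auto
  show "\<forall>p\<in>{a..b'}. p \<le> b \<or> b \<le> p" using \<open>b' \<le> b\<close> by (auto intro: order.trans)
qed

lemma interval_chain_bound_split:
  fixes x x' y :: "'s::lattice"
  assumes modular: "modular_lattice TYPE('s)"
    and bound: "interval_chain_bound (Lattices.inf x y) (Lattices.sup x y) (Suc k)"
    and x': "Lattices.inf x y < x'" "x' < x"
  shows "interval_chain_bound (Lattices.inf x (Lattices.sup x' y)) (Lattices.sup x (Lattices.sup x' y)) k"
    and "interval_chain_bound (Lattices.inf x' y) (Lattices.sup x' y) k"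
proof -
  note S = modular_interval_split[OF modular less_imp_le[OF x'(1)] x'(2)]
  show "interval_chain_bound (Lattices.inf x (Lattices.sup x' y)) (Lattices.sup x (Lattices.sup x' y)) k"
    unfolding S(2,3) using interval_chain_bound_Suc_lower[OF bound x'(1)] x'(2)
    by (simp add: less_imp_le le_supI1)
  show "interval_chain_bound (Lattices.inf x' y) (Lattices.sup x' y) k"
    unfolding S(1) using interval_chain_bound_Suc_upper[OF bound S(4)] x'(1)
    by (simp add: less_imp_le le_supI1)
qed

lemma modular_pair_induct [consumes 2, case_names le sym diamond split]:
  fixes x y :: "'s::lattice"
  assumes modular: "modular_lattice TYPE('s)" and finite: "finite_length TYPE('s)"
    and le: "\<And>x y. x \<le> y \<Longrightarrow> P x y"
    and sym: "\<And>x y. P x y \<Longrightarrow> P y x"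
    and diamond: "\<And>x y. Lattices.inf x y \<prec> x \<Longrightarrow> Lattices.inf x y \<prec> y \<Longrightarrow>
      x \<prec> Lattices.sup x y \<Longrightarrow> y \<prec> Lattices.sup x y \<Longrightarrow> P x y"
    and split: "\<And>x x' y. Lattices.inf x y < x' \<Longrightarrow> x' < x \<Longrightarrow>
      P x (Lattices.sup x' y) \<Longrightarrow> P x' y \<Longrightarrow> P x y"
  shows "P x y"
proof -
  obtain k where "interval_chain_bound (Lattices.inf x y) (Lattices.sup x y) k"
    using interval_chain_bound_exists[OF finite] .
  then show ?thesis
  proof (induction k arbitrary: x y)
    case 0
    then show ?case using not_interval_chain_bound_0 by (metis inf_le1 le_supI1)
  next
    case (Suc k)
    have split_Suc: "P x y"
      if bound: "interval_chain_bound (Lattices.inf x y) (Lattices.sup x y) (Suc k)"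
        and x': "Lattices.inf x y < x'" "x' < x" for x x' y
      using split[OF x' Suc.IH[OF interval_chain_bound_split(1)[OF modular bound x']]
          Suc.IH[OF interval_chain_bound_split(2)[OF modular bound x']]] .
    show ?case
    proof (cases "x \<le> y \<or> y \<le> x")
      case True
      then show ?thesis using le sym by blast
    next
      case incomparable: False
      have "Lattices.inf x y \<noteq> x" using incomparable inf_le2[of x y] by metis
      moreover have "Lattices.inf x y \<noteq> y" using incomparable inf_le1[of x y] by metis
      ultimately have below: "Lattices.inf x y < x" "Lattices.inf x y < y"
        by (simp_all add: less_le)
      show ?thesis
      proof (cases "Lattices.inf x y \<prec> x \<and> Lattices.inf x y \<prec> y")
        case True
        moreover have "x \<noteq> y" using incomparable by auto
        ultimately show ?thesis
          using diamond covers_sup_of_distinct_covers[OF modular] by (metis sup_commute)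
      next
        case False
        then consider x' where "Lattices.inf x y < x'" "x' < x"
          | y' where "Lattices.inf y x < y'" "y' < y"
          using below unfolding covers_def by (auto simp: inf_commute)
        then show ?thesis
        proof cases
          case 1
          then show ?thesis using split_Suc Suc.prems by blast
        next
          case 2
          then show ?thesis
            using split_Suc[of y x] Suc.prems sym by (simp add: inf_commute sup_commute)
        qed
      qed
    qed
  qed
qed

lemma maximal_chain_Cons_Cons:
  "maximal_chain x y (x' # a # rest) \<longleftrightarrow> x' = x \<and> x \<prec> a \<and> maximal_chain a y (a # rest)"
  unfolding maximal_chain_def by (auto simp: All_less_Suc2[where n="length rest"])

lemma maximal_chain_singleton: "maximal_chain x y [a] \<longleftrightarrow> a = x \<and> x = y"
  unfolding maximal_chain_def by auto

lemma maximal_chain_hd: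
  assumes "maximal_chain x y xs"
  obtains rest where "xs = x # rest"
  using assms unfolding maximal_chain_def by (cases xs) auto

lemma maximal_chainE:
  assumes "maximal_chain x y xs"
  obtains "xs = [x]" "x = y"
  | a rest where "xs = x # a # rest" "x \<prec> a" "maximal_chain a y (a # rest)"
proof (cases xs)
  case Nil
  then show ?thesis using assms by (simp add: maximal_chain_def)
next
  case (Cons x' rest)
  show ?thesis
  proof (cases rest)
    case Nil
    then show ?thesis using that(1) assms Cons by (simp add: maximal_chain_singleton)
  next
    case (Cons a rest')
    then show ?thesis using that(2) assms \<open>xs = x' # rest\<close> by (simp add: maximal_chain_Cons_Cons)
  qed
qed

lemma maximal_chain_Cons:
  assumes "x \<prec> a" and chain: "maximal_chain a y xs"
  shows "maximal_chain x y (x # xs)"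
proof -
  obtain rest where "xs = a # rest" using chain by (rule maximal_chain_hd)
  then show ?thesis using assms by (simp add: maximal_chain_Cons_Cons)
qed

lemma maximal_chain_le: "maximal_chain x y xs \<Longrightarrow> x \<le> y"
proof (induction xs arbitrary: x)
  case Nil
  then show ?case by (simp add: maximal_chain_def)
next
  case (Cons b xs)
  from Cons.prems show ?case
  proof (cases rule: maximal_chainE)
    case (2 a rest)
    then have "a \<le> y" using Cons.IH by simp
    then show ?thesis using covers_less[OF 2(2)] by (meson less_imp_le order.trans)
  qed simp
qed

lemma maximal_chain_refl:
  assumes "maximal_chain x x xs"
  shows "xs = [x]"
  using assms
proof (cases rule: maximal_chainE)
  case (2 a rest)
  then have "x < a" "a \<le> x" using covers_less maximal_chain_le by blast+
  then show ?thesis using leD by blast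
qed simp

lemma maximal_chain_append:
  "maximal_chain x z xs \<Longrightarrow> maximal_chain z y ys \<Longrightarrow> maximal_chain x y (xs @ tl ys)"
proof (induction xs arbitrary: x)
  case Nil
  then show ?case by (simp add: maximal_chain_def)
next
  case (Cons b xs)
  from Cons.prems(1) show ?case
  proof (cases rule: maximal_chainE)
    case 1
    obtain rest where "ys = z # rest" using Cons.prems(2) by (rule maximal_chain_hd)
    then show ?thesis using 1 Cons.prems(2) by simp
  next
    case (2 a rest)
    then have "maximal_chain a y (xs @ tl ys)" using Cons.IH Cons.prems(2) by simp
    then show ?thesis using maximal_chain_Cons[OF 2(2)] 2(1) by simp
  qed
qed

lemma chain_comp_append:
  assumes "xs \<noteq> []" "ys \<noteq> []" "last xs = hd ys"
  shows "chain_comp \<phi> (xs @ tl ys) = chain_comp \<phi> ys \<circ>\<^sub>m chain_comp \<phi> xs"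
  using assms
proof (induction xs rule: induct_list012)
  case (2 a)
  then show ?case by (cases ys) auto
next
  case (3 a b zs)
  then show ?case by (simp add: map_comp_assoc)
qed simp

lemma maximal_chain_exists:
  assumes "finite_length TYPE('s::order)" and "(x::'s) \<le> y"
  obtains xs where "maximal_chain x y xs"
proof -
  obtain k where "interval_chain_bound x y k"
    using interval_chain_bound_exists[OF assms(1)] .
  then have "\<exists>xs. maximal_chain x y xs" using \<open>x \<le> y\<close>
  proof (induction k arbitrary: x y)
    case 0
    then show ?case using not_interval_chain_bound_0 by blast
  next
    case (Suc k)
    show ?case
    proof (cases "x \<prec> y \<or> x = y")
      case True
      then have "maximal_chain x y [x, y] \<or> maximal_chain x y [x]"
        using maximal_chain_Cons[of x y y "[y]"] by (auto simp: maximal_chain_singleton)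
      then show ?thesis by blast
    next
      case False
      then obtain z where z: "x < z" "z < y" using Suc.prems(2) unfolding covers_def by auto
      have "\<exists>xs. maximal_chain x z xs"
        using Suc.IH[OF interval_chain_bound_Suc_upper[OF Suc.prems(1) z(2)]] z by (simp add: less_imp_le)
      moreover have "\<exists>ys. maximal_chain z y ys"
        using Suc.IH[OF interval_chain_bound_Suc_lower[OF Suc.prems(1) z(1)]] z by (simp add: less_imp_le)
      ultimately show ?thesis using maximal_chain_append by blast
    qed
  qed
  then show ?thesis using that by blast
qed

locale modular_locally_connected_system =
  fixes L :: "'s::lattice \<Rightarrow> ('a, 'b) gorder_scheme"
    and \<phi> :: "'s \<Rightarrow> 's \<Rightarrow> ('a \<rightharpoonup> 'a)"
  assumes modular: "modular_lattice TYPE('s)"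
    and finite: "finite_length TYPE('s)"
    and locally_connected: "locally_connected_system L \<phi>"
begin

abbreviation \<Phi> :: "'s \<Rightarrow> 's \<Rightarrow> ('a \<rightharpoonup> 'a)" where
  "\<Phi> \<equiv> induced_maps L \<phi>"

lemma lattice_finite_length_L: "lattice_finite_length (L x)"
  using locally_connected unfolding locally_connected_system_def by blast

lemma lattice_L: "lattice (L x)"
  using lattice_finite_length_L unfolding lattice_finite_length_def by blast

lemma filter_ideal_iso_cover: "u \<prec> v \<Longrightarrow> filter_ideal_iso (L u) (L v) (\<phi> v u)"
  using locally_connected unfolding locally_connected_system_def filter_ideal_iso_def by blast

lemma cover_map_nonempty:
  assumes "u \<prec> v"
  shows "\<phi> v u \<noteq> Map.empty"
proof -
  have "dom (\<phi> v u) \<noteq> {}"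
    using locally_connected assms unfolding locally_connected_system_def by blast
  then show ?thesis by auto
qed

lemma covering_diamond:
  assumes "Lattices.inf x y \<prec> x" "Lattices.inf x y \<prec> y"
    "x \<prec> Lattices.sup x y" "y \<prec> Lattices.sup x y"
  shows "\<phi> (Lattices.sup x y) x \<circ>\<^sub>m \<phi> x (Lattices.inf x y)
           = \<phi> (Lattices.sup x y) y \<circ>\<^sub>m \<phi> y (Lattices.inf x y)"
    and "ran (\<phi> (Lattices.sup x y) x) \<inter> ran (\<phi> (Lattices.sup x y) y)
           \<subseteq> ran (\<phi> (Lattices.sup x y) x \<circ>\<^sub>m \<phi> x (Lattices.inf x y))"
    and "dom (\<phi> x (Lattices.inf x y)) \<inter> dom (\<phi> y (Lattices.inf x y))
           \<subseteq> dom (\<phi> (Lattices.sup x y) x \<circ>\<^sub>m \<phi> x (Lattices.inf x y))"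
  using locally_connected assms unfolding locally_connected_system_def by blast+

lemma chain_comp_diamond:
  assumes xa: "x \<prec> a" and xb: "x \<prec> b" and "a \<noteq> b"
    and zs: "maximal_chain (Lattices.sup a b) y zs"
  shows "chain_comp \<phi> (a # zs) \<circ>\<^sub>m \<phi> a x = chain_comp \<phi> (b # zs) \<circ>\<^sub>m \<phi> b x"
proof -
  obtain rest where zs_eq: "zs = Lattices.sup a b # rest" using zs by (rule maximal_chain_hd)
  have "Lattices.inf a b = x" using inf_of_distinct_covers[OF xa xb \<open>a \<noteq> b\<close>] .
  moreover have "a \<prec> Lattices.sup a b"
    using covers_sup_of_distinct_covers[OF modular xa xb \<open>a \<noteq> b\<close>] .
  moreover have "b \<prec> Lattices.sup a b"
    using covers_sup_of_distinct_covers[OF modular xb xa] \<open>a \<noteq> b\<close> by (simp add: sup_commute)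
  ultimately have "\<phi> (Lattices.sup a b) a \<circ>\<^sub>m \<phi> a x = \<phi> (Lattices.sup a b) b \<circ>\<^sub>m \<phi> b x"
    using covering_diamond(1)[of a b] xa xb by simp
  then show ?thesis using zs_eq by (simp add: map_comp_assoc)
qed

lemma chain_comp_indep_bounded:
  "interval_chain_bound x y k \<Longrightarrow> maximal_chain x y xs \<Longrightarrow> maximal_chain x y ys \<Longrightarrow>
     chain_comp \<phi> xs = chain_comp \<phi> ys"
proof (induction k arbitrary: x xs ys)
  case 0
  then show ?case using not_interval_chain_bound_0[OF maximal_chain_le[OF 0(2)]] by simp
next
  case (Suc k)
  have IH: "chain_comp \<phi> (a # as) = chain_comp \<phi> (a # bs)"
    if "x \<prec> a" "maximal_chain a y (a # as)" "maximal_chain a y (a # bs)" for a as bs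
    using Suc.IH[OF interval_chain_bound_Suc_lower[OF Suc.prems(1) covers_less[OF that(1)]
          maximal_chain_le[OF that(2)]] that(2,3)] .
  from Suc.prems(2) show ?case
  proof (cases rule: maximal_chainE)
    case 1
    then have "ys = [x]" using maximal_chain_refl Suc.prems(3) by blast
    then show ?thesis using 1 by simp
  next
    case a: (2 a as)
    from Suc.prems(3) show ?thesis
    proof (cases rule: maximal_chainE)
      case 1
      then have "x < a" "a \<le> x" using a covers_less maximal_chain_le by blast+
      then show ?thesis using leD by blast
    next
      case b: (2 b bs)
      show ?thesis
      proof (cases "a = b")
        case True
        then show ?thesis using IH[OF a(2,3)] a(1) b(1,3) by simp
      next
        case False
        have "Lattices.sup a b \<le> y" using maximal_chain_le[OF a(3)] maximal_chain_le[OF b(3)] by simp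
        then obtain zs where zs: "maximal_chain (Lattices.sup a b) y zs"
          using maximal_chain_exists[OF finite] by blast
        have "a \<prec> Lattices.sup a b"
          using covers_sup_of_distinct_covers[OF modular a(2) b(2) False] .
        then have "chain_comp \<phi> (a # as) = chain_comp \<phi> (a # zs)"
          using IH[OF a(2,3) maximal_chain_Cons[OF _ zs]] by simp
        have "b \<prec> Lattices.sup a b"
          using covers_sup_of_distinct_covers[OF modular b(2) a(2)] False by (simp add: sup_commute)
        then have "chain_comp \<phi> (b # bs) = chain_comp \<phi> (b # zs)"
          using IH[OF b(2,3) maximal_chain_Cons[OF _ zs]] by simp
        then show ?thesis
          using \<open>chain_comp \<phi> (a # as) = chain_comp \<phi> (a # zs)\<close> a(1) b(1)
            chain_comp_diamond[OF a(2) b(2) False zs] by simp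
      qed
    qed
  qed
qed

lemma chain_comp_indep:
  assumes "maximal_chain x y xs" "maximal_chain x y ys"
  shows "chain_comp \<phi> xs = chain_comp \<phi> ys"
proof -
  obtain k where "interval_chain_bound x y k" using interval_chain_bound_exists[OF finite] .
  then show ?thesis using assms by (rule chain_comp_indep_bounded)
qed

lemma induced_maps_chain_comp:
  assumes "x < y" and xs: "maximal_chain x y xs"
  shows "\<Phi> y x = chain_comp \<phi> xs"
proof -
  have "maximal_chain x y (SOME xs. maximal_chain x y xs)" using xs by (rule someI)
  then have "chain_comp \<phi> (SOME xs. maximal_chain x y xs) = chain_comp \<phi> xs"
    using xs by (rule chain_comp_indep)
  then show ?thesis using \<open>x < y\<close> unfolding induced_maps_def by (simp add: less_imp_neq)
qed

lemma induced_maps_refl: "\<Phi> x x = id_on_carrier (L x)"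
  unfolding induced_maps_def by simp

lemma induced_maps_cover:
  assumes "x \<prec> y"
  shows "\<Phi> y x = \<phi> y x"
proof -
  have "maximal_chain x y [x, y]"
    using maximal_chain_Cons[OF assms] by (simp add: maximal_chain_singleton)
  then show ?thesis using induced_maps_chain_comp[OF covers_less[OF assms]] by simp
qed

lemma filter_ideal_iso_chain_comp:
  "maximal_chain x y xs \<Longrightarrow> x < y \<Longrightarrow> filter_ideal_iso (L x) (L y) (chain_comp \<phi> xs)"
proof (induction xs arbitrary: x)
  case Nil
  then show ?case by (simp add: maximal_chain_def)
next
  case (Cons x' xs)
  from Cons.prems(1) show ?case
  proof (cases rule: maximal_chainE)
    case 1
    then show ?thesis using Cons.prems(2) by simp
  next
    case (2 a rest)
    then have comp: "chain_comp \<phi> (x' # xs) = chain_comp \<phi> xs \<circ>\<^sub>m \<phi> a x" by simp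
    have cover: "filter_ideal_iso (L x) (L a) (\<phi> a x)" using filter_ideal_iso_cover[OF 2(2)] .
    show ?thesis
    proof (cases "a = y")
      case True
      then have "a # rest = [a]" using maximal_chain_refl 2(3) by blast
      then have "xs = [y]" using 2(1) True by simp
      then show ?thesis using comp cover True by simp
    next
      case False
      then have "a < y" using maximal_chain_le[OF 2(3)] by simp
      then have "filter_ideal_iso (L a) (L y) (chain_comp \<phi> xs)" using Cons.IH 2 by simp
      then show ?thesis using comp filter_ideal_iso_map_comp[OF lattice_L lattice_L lattice_L cover] by simp
    qed
  qed
qed

lemma filter_ideal_iso_induced_maps:
  assumes "x \<le> y"
  shows "filter_ideal_iso (L x) (L y) (\<Phi> y x)"
proof (cases "x = y")
  case True
  then show ?thesis using filter_ideal_iso_id_on_carrier[OF lattice_L] by (simp add: induced_maps_refl)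
next
  case False
  with assms have "x < y" by simp
  obtain xs where "maximal_chain x y xs" using maximal_chain_exists[OF finite assms] .
  then show ?thesis
    using filter_ideal_iso_chain_comp induced_maps_chain_comp[OF \<open>x < y\<close>] \<open>x < y\<close> by simp
qed

lemma induced_maps_trans:
  assumes "x \<le> z" "z \<le> y"
  shows "\<Phi> y x = \<Phi> y z \<circ>\<^sub>m \<Phi> z x"
proof -
  consider "x = z" | "z = y" | "x < z" "z < y" using assms by (auto simp: less_le)
  then show ?thesis
  proof cases
    case 1
    have "dom (\<Phi> y z) \<subseteq> carrier (L z)"
      using filter_ideal_iso_partial_bij[OF filter_ideal_iso_induced_maps[OF assms(2)]]
      unfolding partial_bij_def by blast
    then show ?thesis using 1 by (simp add: induced_maps_refl map_comp_id_on_carrier_right)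
  next
    case 2
    have "ran (\<Phi> y x) \<subseteq> carrier (L y)"
      using filter_ideal_iso_partial_bij[OF filter_ideal_iso_induced_maps[OF order.trans[OF assms]]]
      unfolding partial_bij_def by blast
    then show ?thesis using 2 by (simp add: induced_maps_refl map_comp_id_on_carrier_left)
  next
    case 3
    obtain xs ys where xs: "maximal_chain x z xs" and ys: "maximal_chain z y ys"
      using maximal_chain_exists[OF finite] assms by metis
    have "\<Phi> y x = chain_comp \<phi> (xs @ tl ys)"
      using induced_maps_chain_comp[OF less_trans[OF 3] maximal_chain_append[OF xs ys]] .
    also have "\<dots> = chain_comp \<phi> ys \<circ>\<^sub>m chain_comp \<phi> xs"
      using xs ys by (intro chain_comp_append) (auto simp: maximal_chain_def)
    also have "\<dots> = \<Phi> y z \<circ>\<^sub>m \<Phi> z x"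
      using induced_maps_chain_comp 3 xs ys by simp
    finally show ?thesis .
  qed
qed

lemma ran_induced_maps_sup:
  "ran (\<Phi> (Lattices.sup x y) x) \<inter> ran (\<Phi> (Lattices.sup x y) y)
     \<subseteq> ran (\<Phi> (Lattices.sup x y) (Lattices.inf x y))"
using modular finite proof (induction x y rule: modular_pair_induct)
  case (le x y)
  then show ?case by (simp add: inf.absorb1 sup.absorb2)
next
  case (sym x y)
  then show ?case by (simp add: inf_commute sup_commute Int_commute)
next
  case (diamond x y)
  have "\<Phi> (Lattices.sup x y) (Lattices.inf x y) = \<phi> (Lattices.sup x y) x \<circ>\<^sub>m \<phi> x (Lattices.inf x y)"
    using induced_maps_trans[of "Lattices.inf x y" x "Lattices.sup x y"] diamond
    by (simp add: induced_maps_cover)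
  then show ?case using covering_diamond(2)[OF diamond] diamond by (simp add: induced_maps_cover)
next
  case (split x x' y)
  note S = modular_interval_split[OF modular less_imp_le[OF split(1)] split(2)]
  let ?m = "Lattices.inf x y" and ?j = "Lattices.sup x y" and ?y' = "Lattices.sup x' y"
  have upper: "ran (\<Phi> ?j x) \<inter> ran (\<Phi> ?j ?y') \<subseteq> ran (\<Phi> ?j x')"
    using split(3)[unfolded S(2,3)] .
  have lower: "ran (\<Phi> ?y' x') \<inter> ran (\<Phi> ?y' y) \<subseteq> ran (\<Phi> ?y' ?m)"
    using split(4)[unfolded S(1)] .
  have y'_j: "?y' \<le> ?j" using S(4) by (rule less_imp_le)
  have comp: "\<Phi> ?j y = \<Phi> ?j ?y' \<circ>\<^sub>m \<Phi> ?y' y" "\<Phi> ?j x' = \<Phi> ?j ?y' \<circ>\<^sub>m \<Phi> ?y' x'"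
    "\<Phi> ?j ?m = \<Phi> ?j ?y' \<circ>\<^sub>m \<Phi> ?y' ?m"
    using induced_maps_trans[OF sup_ge2 y'_j] induced_maps_trans[OF sup_ge1 y'_j]
      induced_maps_trans[OF le_supI2[OF inf_le2] y'_j] .
  have inj: "inj_on (\<Phi> ?j ?y') (dom (\<Phi> ?j ?y'))"
    using filter_ideal_iso_partial_bij[OF filter_ideal_iso_induced_maps[OF y'_j]]
    unfolding partial_bij_def by blast
  show ?case
  proof
    fix a assume a: "a \<in> ran (\<Phi> ?j x) \<inter> ran (\<Phi> ?j y)"
    obtain c where c: "c \<in> ran (\<Phi> ?y' y)" "\<Phi> ?j ?y' c = Some a"
      using a comp(1) ran_map_comp_iff by (metis IntD2)
    have "a \<in> ran (\<Phi> ?j x')" using upper a c(2) by (blast intro: ranI)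
    then obtain b where b: "b \<in> ran (\<Phi> ?y' x')" "\<Phi> ?j ?y' b = Some a"
      using comp(2) ran_map_comp_iff by metis
    have "b = c" using inj b(2) c(2) by (metis domI inj_onD)
    then have "b \<in> ran (\<Phi> ?y' ?m)" using lower b(1) c(1) by blast
    then show "a \<in> ran (\<Phi> ?j ?m)" using comp(3) ran_map_comp_iff b(2) by metis
  qed
qed

lemma dom_induced_maps_inf:
  "dom (\<Phi> x (Lattices.inf x y)) \<inter> dom (\<Phi> y (Lattices.inf x y))
     \<subseteq> dom (\<Phi> (Lattices.sup x y) (Lattices.inf x y))"
using modular finite proof (induction x y rule: modular_pair_induct)
  case (le x y)
  then show ?case by (simp add: inf.absorb1 sup.absorb2)
next
  case (sym x y)
  then show ?case by (simp add: inf_commute sup_commute Int_commute)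
next
  case (diamond x y)
  have "\<Phi> (Lattices.sup x y) (Lattices.inf x y) = \<phi> (Lattices.sup x y) x \<circ>\<^sub>m \<phi> x (Lattices.inf x y)"
    using induced_maps_trans[of "Lattices.inf x y" x "Lattices.sup x y"] diamond
    by (simp add: induced_maps_cover)
  then show ?case using covering_diamond(3)[OF diamond] diamond by (simp add: induced_maps_cover)
next
  case (split x x' y)
  note S = modular_interval_split[OF modular less_imp_le[OF split(1)] split(2)]
  let ?m = "Lattices.inf x y" and ?j = "Lattices.sup x y" and ?y' = "Lattices.sup x' y"
  have upper: "dom (\<Phi> x x') \<inter> dom (\<Phi> ?y' x') \<subseteq> dom (\<Phi> ?j x')"
    using split(3)[unfolded S(2,3)] .
  have lower: "dom (\<Phi> x' ?m) \<inter> dom (\<Phi> y ?m) \<subseteq> dom (\<Phi> ?y' ?m)"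
    using split(4)[unfolded S(1)] .
  have m_x': "?m \<le> x'" and x'_x: "x' \<le> x" using split(1,2) by simp_all
  have comp: "\<Phi> x ?m = \<Phi> x x' \<circ>\<^sub>m \<Phi> x' ?m" "\<Phi> ?y' ?m = \<Phi> ?y' x' \<circ>\<^sub>m \<Phi> x' ?m"
    "\<Phi> ?j ?m = \<Phi> ?j x' \<circ>\<^sub>m \<Phi> x' ?m"
    using induced_maps_trans[OF m_x' x'_x] induced_maps_trans[OF m_x' sup_ge1]
      induced_maps_trans[OF m_x' le_supI1[OF x'_x]] .
  show ?case
  proof
    fix a assume a: "a \<in> dom (\<Phi> x ?m) \<inter> dom (\<Phi> y ?m)"
    obtain b where b: "\<Phi> x' ?m a = Some b" "b \<in> dom (\<Phi> x x')"
      using a comp(1) dom_map_comp_iff by (metis IntD1)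
    have "a \<in> dom (\<Phi> x' ?m)" using b(1) by (rule domI)
    then have "a \<in> dom (\<Phi> ?y' ?m)" using lower a by blast
    then have "b \<in> dom (\<Phi> ?y' x')" using comp(2) dom_map_comp_iff b(1) by (metis option.inject)
    then have "b \<in> dom (\<Phi> ?j x')" using upper b(2) by blast
    then show "a \<in> dom (\<Phi> ?j ?m)" using comp(3) dom_map_comp_iff b(1) by metis
  qed
qed

lemma connected_system_induced_maps: "connected_system L \<Phi>"
  unfolding connected_system_def
proof (intro conjI allI impI)
  fix x y z :: 's
  show "lattice_finite_length (L x)" by (rule lattice_finite_length_L)
  show "\<Phi> x x = id_on_carrier (L x)" by (rule induced_maps_refl)
  show "ran (\<Phi> (Lattices.sup x y) x) \<inter> ran (\<Phi> (Lattices.sup x y) y)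
      \<subseteq> ran (\<Phi> (Lattices.sup x y) (Lattices.inf x y))" by (rule ran_induced_maps_sup)
  show "dom (\<Phi> x (Lattices.inf x y)) \<inter> dom (\<Phi> y (Lattices.inf x y))
      \<subseteq> dom (\<Phi> (Lattices.sup x y) (Lattices.inf x y))" by (rule dom_induced_maps_inf)
  show "x \<le> z \<and> z \<le> y \<Longrightarrow> \<Phi> y x = \<Phi> y z \<circ>\<^sub>m \<Phi> z x" using induced_maps_trans by blast
  show "x \<prec> y \<Longrightarrow> \<Phi> y x \<noteq> Map.empty" using induced_maps_cover cover_map_nonempty by simp
  assume "x \<le> y"
  then show "partial_bij (L x) (L y) (\<Phi> y x)"
    and "lat_filter (L x) (dom (\<Phi> y x))" "lat_ideal (L y) (ran (\<Phi> y x))"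
    and "lattice_iso_between (L x) (L y) (\<Phi> y x)"
    using filter_ideal_iso_induced_maps filter_ideal_iso_partial_bij
    unfolding filter_ideal_iso_def by blast+
qed

end

theorem theorem4p3:
  fixes L :: "'s::lattice \<Rightarrow> ('a, 'b) gorder_scheme"
    and \<phi> :: "'s \<Rightarrow> 's \<Rightarrow> ('a \<rightharpoonup> 'a)"
  assumes "modular_lattice TYPE('s)"
    and "finite_length TYPE('s)"
    and "locally_connected_system L \<phi>"
  shows "(\<forall>x y xs ys. x < y \<and> maximal_chain x y xs \<and> maximal_chain x y ys
            \<longrightarrow> chain_comp \<phi> xs = chain_comp \<phi> ys)
         \<and> connected_system L (induced_maps L \<phi>)"
proof -
  interpret modular_locally_connected_system L \<phi> using assms by unfold_locales
  show ?thesis using chain_comp_indep connected_system_induced_maps by blast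
qed

end
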